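(* Let $a\in\mathcal{A}$ have a $w$-weighted generalized core-EP inverse and $b\in \mathcal{A}$. Then the following are equivalent: (1) $(1-wawa^{\mathrm{gcEP},w})b=0$. (2) $(1-wa^{\mathrm{gcEP},w}wa)b=0$. (3) $(wa)^{\pi}b=0$.
   Context: $\mathcal{A}$ is a complex Banach *-algebra with identity and $w\in\mathcal{A}$. The $w$-weighted generalized core-EP inverse of $a$ is the unique $x$ with $a(wx)^2=x$, $(wawx)^*=wawx$, $\lim_{n\to\infty}\|(aw)^n-(xw)(aw)^{n+1}\|^{1/n}=0$, denoted $a^{\mathrm{gcEP},w}$. $(wa)^{\pi}=1-wa(wa)^d$, with $(wa)^d$ the generalized Drazin inverse of $wa$. *)

theory Defs
  imports "HOL-Analysis.Analysis"
begin

class cbanach_star_algebra = real_normed_algebra_1 + banach +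
  fixes scaleC :: "complex \<Rightarrow> 'a \<Rightarrow> 'a"
    and invol :: "'a \<Rightarrow> 'a"
  assumes scaleC_add_right: "scaleC c (x + y) = scaleC c x + scaleC c y"
    and scaleC_add_left: "scaleC (c + d) x = scaleC c x + scaleC d x"
    and scaleC_scaleC: "scaleC c (scaleC d x) = scaleC (c * d) x"
    and scaleC_one: "scaleC 1 x = x"
    and scaleC_of_real: "scaleC (complex_of_real r) x = scaleR r x"
    and norm_scaleC: "norm (scaleC c x) = cmod c * norm x"
    and scaleC_mult_left: "scaleC c x * y = scaleC c (x * y)"
    and scaleC_mult_right: "x * scaleC c y = scaleC c (x * y)"
    and invol_invol: "invol (invol x) = x"
    and invol_add: "invol (x + y) = invol x + invol y"
    and invol_mult: "invol (x * y) = invol y * invol x"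
    and invol_scaleC: "invol (scaleC c x) = scaleC (cnj c) (invol x)"

definition invertible_el :: "'a::cbanach_star_algebra \<Rightarrow> bool" where
  "invertible_el z \<longleftrightarrow> (\<exists>y. y * z = 1 \<and> z * y = 1)"

definition quasinilpotent :: "'a::cbanach_star_algebra \<Rightarrow> bool" where
  "quasinilpotent q \<longleftrightarrow> (\<forall>l::complex. l \<noteq> 0 \<longrightarrow> invertible_el (scaleC l 1 - q))"

definition is_gdrazin :: "'a::cbanach_star_algebra \<Rightarrow> 'a \<Rightarrow> bool" where
  "is_gdrazin a x \<longleftrightarrow> x * a * x = x \<and> a * x = x * a \<and> quasinilpotent (a - a * a * x)"

definition gdrazin :: "'a::cbanach_star_algebra \<Rightarrow> 'a" where
  "gdrazin a = (THE x. is_gdrazin a x)"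

definition spectral_idem :: "'a::cbanach_star_algebra \<Rightarrow> 'a" where
  "spectral_idem a = 1 - a * gdrazin a"

definition is_wgcEP :: "'a::cbanach_star_algebra \<Rightarrow> 'a \<Rightarrow> 'a \<Rightarrow> bool" where
  "is_wgcEP a w x \<longleftrightarrow>
     a * (w * x) ^ 2 = x \<and>
     invol (w * a * w * x) = w * a * w * x \<and>
     (\<lambda>n. root n (norm ((a * w) ^ n - (x * w) * (a * w) ^ (Suc n)))) \<longlonglongrightarrow> 0"

definition wgcEP :: "'a::cbanach_star_algebra \<Rightarrow> 'a \<Rightarrow> 'a" where
  "wgcEP a w = (THE x. is_wgcEP a w x)"

end

theory Submission
  imports Defs
begin

text \<open>Write \<open>c = w a\<close> and \<open>g = w a\<^sup>g\<^sup>c\<^sup>E\<^sup>P\<^sup>,\<^sup>w\<close>. Then \<open>g\<close> is the (unweighted) generalized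
  core-EP inverse of \<open>c\<close>: \<open>c g\<^sup>2 = g\<close>, \<open>c g\<close> is self-adjoint and \<open>(1 - g c) c\<^sup>n\<close> decays
  faster than every geometric sequence. Decay arguments give \<open>g c g = g\<close> and \<open>g c (c g) = c g\<close>,
  so \<open>c g\<close> and \<open>g c\<close> are idempotents with the same range. Splitting \<open>c\<close> along \<open>f = g c\<close>
  into an invertible and a quasinilpotent corner, and solving the resulting Sylvester equation
  by a series, yields the generalized Drazin inverse \<open>y\<close> of \<open>c\<close>, with \<open>c y\<close> and \<open>f\<close> again
  having the same range. Three idempotents with a common range annihilate the same \<open>b\<close>.

  Since \<open>gdrazin\<close> and \<open>wgcEP\<close> are definite descriptions, both inverses must also be shown
  unique. This needs the fact that quasinilpotent elements have super-geometrically decaying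
  powers, which is proved without complex analysis: averaging the resolvent \<open>(1 - \<mu> u)\<^sup>-\<^sup>1\<close>
  over the \<open>n\<close>-th roots of unity inverts \<open>1 - \<mu>\<^sup>n u\<^sup>n\<close> with bounds uniform in \<open>n\<close>.\<close>

lemma norm_mult3_le:
  fixes a b c :: "'a::real_normed_algebra"
  shows "norm (a * b * c) \<le> norm a * norm b * norm c"
  by (metis mult_right_mono norm_ge_zero norm_mult_ineq order_trans)

section \<open>Super-geometric decay\<close>

text \<open>Decay faster than every geometric sequence, i.e. \<open>limsup \<parallel>h n\<parallel>\<^sup>1\<^sup>/\<^sup>n = 0\<close>.\<close>

definition fast_decay :: "(nat \<Rightarrow> 'a::real_normed_vector) \<Rightarrow> bool" where
  "fast_decay h \<longleftrightarrow> (\<forall>B\<ge>0. (\<lambda>n. B ^ n * norm (h n)) \<longlonglongrightarrow> 0)"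

lemma fast_decayD: "fast_decay h \<Longrightarrow> B \<ge> 0 \<Longrightarrow> (\<lambda>n. B ^ n * norm (h n)) \<longlonglongrightarrow> 0"
  by (simp add: fast_decay_def)

lemma fast_decay_dominated:
  assumes h: "fast_decay h" and "B \<ge> 0"
    and le: "\<And>n. norm (k n) \<le> D * (B ^ n * norm (h n))"
  shows "fast_decay k"
  unfolding fast_decay_def
proof (intro allI impI)
  fix C :: real assume "C \<ge> 0"
  have bound: "norm (C ^ n * norm (k n)) \<le> norm ((C * B) ^ n * norm (h n)) * D" for n
  proof -
    have "C ^ n * norm (k n) \<le> C ^ n * (D * (B ^ n * norm (h n)))"
      using le by (rule mult_left_mono) (use \<open>C \<ge> 0\<close> in simp)
    also have "\<dots> = norm ((C * B) ^ n * norm (h n)) * D"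
      using \<open>C \<ge> 0\<close> \<open>B \<ge> 0\<close> by (simp add: power_mult_distrib ac_simps)
    finally show ?thesis using \<open>C \<ge> 0\<close> by simp
  qed
  have "(\<lambda>n. (C * B) ^ n * norm (h n)) \<longlonglongrightarrow> 0"
    using \<open>C \<ge> 0\<close> \<open>B \<ge> 0\<close> by (intro fast_decayD[OF h]) simp
  then show "(\<lambda>n. C ^ n * norm (k n)) \<longlonglongrightarrow> 0"
    by (rule tendsto_0_le[where K = D]) (intro always_eventually allI bound)
qed

lemma fast_decay_add:
  assumes h: "fast_decay h" and k: "fast_decay k"
    and le: "\<And>n. norm (l n) \<le> norm (h n) + norm (k n)"
  shows "fast_decay l"
  unfolding fast_decay_def
proof (intro allI impI)
  fix B :: real assume "B \<ge> 0"
  have bound: "norm (B ^ n * norm (l n)) \<le> norm (B ^ n * norm (h n) + B ^ n * norm (k n)) * 1" for n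
    using mult_left_mono[OF le, of "B ^ n" n] \<open>B \<ge> 0\<close> by (simp add: algebra_simps)
  have "(\<lambda>n. B ^ n * norm (h n) + B ^ n * norm (k n)) \<longlonglongrightarrow> 0"
    using tendsto_add_zero[OF fast_decayD[OF h] fast_decayD[OF k]] \<open>B \<ge> 0\<close> by simp
  then show "(\<lambda>n. B ^ n * norm (l n)) \<longlonglongrightarrow> 0"
    by (rule tendsto_0_le[where K = 1]) (intro always_eventually allI bound)
qed

lemma fast_decay_Suc_iff: "fast_decay (\<lambda>n. h (Suc n)) \<longleftrightarrow> fast_decay h"
proof
  assume h: "fast_decay (\<lambda>n. h (Suc n))"
  show "fast_decay h"
    unfolding fast_decay_def
  proof (intro allI impI)
    fix B :: real assume "B \<ge> 0"
    have "(\<lambda>n. B * (B ^ n * norm (h (Suc n)))) \<longlonglongrightarrow> B * 0"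
      using fast_decayD[OF h \<open>B \<ge> 0\<close>] by (rule tendsto_mult_left)
    then have "(\<lambda>n. B ^ Suc n * norm (h (Suc n))) \<longlonglongrightarrow> 0"
      by (simp add: mult.assoc)
    then show "(\<lambda>n. B ^ n * norm (h n)) \<longlonglongrightarrow> 0"
      by (rule LIMSEQ_imp_Suc)
  qed
next
  assume h: "fast_decay h"
  show "fast_decay (\<lambda>n. h (Suc n))"
    unfolding fast_decay_def
  proof (intro allI impI)
    fix B :: real assume "B \<ge> 0"
    have "B ^ n \<le> (B + 1) ^ Suc n" for n
    proof -
      have "B ^ n \<le> (B + 1) ^ n" using \<open>B \<ge> 0\<close> by (intro power_mono) auto
      also have "\<dots> \<le> (B + 1) ^ Suc n" using \<open>B \<ge> 0\<close> by (intro power_increasing) auto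
      finally show ?thesis .
    qed
    then have bound: "norm (B ^ n * norm (h (Suc n))) \<le> norm ((B + 1) ^ Suc n * norm (h (Suc n))) * 1" for n
      using \<open>B \<ge> 0\<close> by (simp add: mult_right_mono)
    have "(\<lambda>n. (B + 1) ^ Suc n * norm (h (Suc n))) \<longlonglongrightarrow> 0"
      using \<open>B \<ge> 0\<close> by (intro LIMSEQ_Suc[OF fast_decayD[OF h]]) simp
    then show "(\<lambda>n. B ^ n * norm (h (Suc n))) \<longlonglongrightarrow> 0"
      by (rule tendsto_0_le[where K = 1]) (intro always_eventually allI bound)
  qed
qed

lemma fast_decay_root:
  assumes "(\<lambda>n. root n (norm (h n))) \<longlonglongrightarrow> 0"
  shows "fast_decay h"
  unfolding fast_decay_def
proof (intro allI impI)
  fix B :: real assume "B \<ge> 0"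
  have "eventually (\<lambda>n. root n (norm (h n)) < 1 / (2 * B + 1)) sequentially"
    using assms \<open>B \<ge> 0\<close> by (intro order_tendstoD(2)) auto
  moreover have "eventually (\<lambda>n. n > 0) sequentially"
    by (rule eventually_gt_at_top)
  ultimately have bound: "eventually (\<lambda>n. norm (B ^ n * norm (h n)) \<le> norm ((1/2::real) ^ n) * 1) sequentially"
  proof eventually_elim
    case (elim n)
    have "norm (h n) = root n (norm (h n)) ^ n" using elim by simp
    also have "\<dots> \<le> (1 / (2 * B + 1)) ^ n"
      using elim by (intro power_mono) (auto simp: real_root_ge_zero)
    finally have "B ^ n * norm (h n) \<le> B ^ n * (1 / (2 * B + 1)) ^ n"
      by (rule mult_left_mono) (use \<open>B \<ge> 0\<close> in auto)
    also have "\<dots> = (B / (2 * B + 1)) ^ n"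
      by (simp add: power_divide)
    also have "\<dots> \<le> (1/2) ^ n"
      using \<open>B \<ge> 0\<close> by (intro power_mono) (auto simp: field_simps)
    finally show ?case using \<open>B \<ge> 0\<close> by simp
  qed
  show "(\<lambda>n. B ^ n * norm (h n)) \<longlonglongrightarrow> 0"
    by (rule tendsto_0_le[OF _ bound]) (rule LIMSEQ_power_zero, simp)
qed

lemma fast_decay_imp_summable:
  fixes h :: "nat \<Rightarrow> 'a::banach"
  assumes "fast_decay h"
  shows "summable h"
proof (rule summable_comparison_test_ev)
  have "eventually (\<lambda>n. 2 ^ n * norm (h n) < 1) sequentially"
    using fast_decayD[OF assms, of 2] by (intro order_tendstoD(2)) auto
  then show "eventually (\<lambda>n. norm (h n) \<le> (1/2) ^ n) sequentially"
    by eventually_elim (simp add: field_simps)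
  show "summable (\<lambda>n. (1/2::real) ^ n)"
    by (rule summable_geometric) simp
qed

lemma fast_decay_const_iff [simp]: "fast_decay (\<lambda>n. v) \<longleftrightarrow> v = 0"
proof
  assume "fast_decay (\<lambda>n. v)"
  then have "(\<lambda>n. norm v) \<longlonglongrightarrow> 0"
    using fast_decayD[of _ 1] by simp
  then show "v = 0" by (simp add: LIMSEQ_const_iff)
qed (simp add: fast_decay_def)

lemma fast_decay_mult_power_zero:
  fixes a c g v x w :: "'a::real_normed_algebra_1"
  assumes dec: "fast_decay (\<lambda>n. a * c ^ n)" and v: "\<And>n. v = a * c ^ n * x * g ^ n * w"
  shows "v = 0"
proof -
  have "norm v \<le> (norm x * norm w) * (norm g ^ n * norm (a * c ^ n))" for n
  proof -
    have "norm v \<le> norm (a * c ^ n * x * g ^ n) * norm w"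
      unfolding v[of n] by (rule norm_mult_ineq)
    also have "\<dots> \<le> norm (a * c ^ n) * norm x * norm (g ^ n) * norm w"
      by (intro mult_right_mono norm_mult3_le) simp
    also have "\<dots> \<le> norm (a * c ^ n) * norm x * norm g ^ n * norm w"
      by (intro mult_right_mono mult_left_mono norm_power_ineq) simp_all
    finally show ?thesis
      by (simp add: ac_simps)
  qed
  then have "fast_decay (\<lambda>n. v)"
    by (rule fast_decay_dominated[OF dec norm_ge_zero])
  then show ?thesis
    by simp
qed

lemma fast_decay_power_absorb_left:
  fixes u z X :: "'a::real_normed_algebra_1"
  assumes dec: "fast_decay (\<lambda>n. u ^ n)" and X: "X = u * X * z"
  shows "X = 0"
proof -
  have pow: "X = u ^ n * X * z ^ n" for n
  proof (induction n)
    case (Suc n)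
    have "X = u * (u ^ n * X * z ^ n) * z" using X Suc by simp
    then show ?case by (simp add: mult.assoc power_commutes)
  qed simp
  have "norm X \<le> norm X * (norm z ^ n * norm (u ^ n))" for n
  proof -
    have "norm X \<le> norm (u ^ n) * norm X * norm (z ^ n)"
      using pow[of n] norm_mult3_le by metis
    also have "\<dots> \<le> norm (u ^ n) * norm X * norm z ^ n"
      by (intro mult_left_mono norm_power_ineq) auto
    finally show ?thesis by (simp add: ac_simps)
  qed
  then have "fast_decay (\<lambda>n. X)"
    by (rule fast_decay_dominated[OF dec norm_ge_zero])
  then show ?thesis by simp
qed

lemma fast_decay_power_absorb_right:
  fixes u z X :: "'a::real_normed_algebra_1"
  assumes dec: "fast_decay (\<lambda>n. u ^ n)" and X: "X = z * X * u"
  shows "X = 0"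
proof -
  have pow: "X = z ^ n * X * u ^ n" for n
  proof (induction n)
    case (Suc n)
    have "X = z * (z ^ n * X * u ^ n) * u" using X Suc by simp
    then show ?case by (simp add: mult.assoc power_commutes)
  qed simp
  have "norm X \<le> norm X * (norm z ^ n * norm (u ^ n))" for n
  proof -
    have "norm X \<le> norm (z ^ n) * norm X * norm (u ^ n)"
      using pow[of n] norm_mult3_le by metis
    also have "\<dots> \<le> norm z ^ n * norm X * norm (u ^ n)"
      by (intro mult_right_mono norm_power_ineq) auto
    finally show ?thesis by (simp add: ac_simps)
  qed
  then have "fast_decay (\<lambda>n. X)"
    by (rule fast_decay_dominated[OF dec norm_ge_zero])
  then show ?thesis by simp
qed

section \<open>Quasinilpotent elements\<close>

lemma scaleC_zero_left [simp]: "scaleC 0 (x::'a::cbanach_star_algebra) = 0"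
  using scaleC_of_real[of 0 x] by simp

lemma scaleC_diff_left: "scaleC (c - d) (x::'a::cbanach_star_algebra) = scaleC c x - scaleC d x"
  using scaleC_add_left[of "c - d" d x] by (simp add: algebra_simps)

lemma scaleC_diff_right: "scaleC c ((x::'a::cbanach_star_algebra) - y) = scaleC c x - scaleC c y"
  using scaleC_add_right[of c "x - y" y] by (simp add: algebra_simps)

lemma scaleC_sum_left: "scaleC (\<Sum>k\<in>A. f k) (x::'a::cbanach_star_algebra) = (\<Sum>k\<in>A. scaleC (f k) x)"
  by (induction A rule: infinite_finite_induct) (auto simp: scaleC_add_left)

lemma scaleC_power: "(scaleC c (x::'a::cbanach_star_algebra)) ^ n = scaleC (c ^ n) (x ^ n)"
  by (induction n) (simp_all add: scaleC_one scaleC_mult_left scaleC_mult_right scaleC_scaleC mult.commute)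

lemma scaleC_of_nat: "scaleC (of_nat n) (x::'a::cbanach_star_algebra) = of_nat n * x"
  using scaleC_of_real[of "real n" x] by (simp add: scaleR_conv_of_real)

lemma geometric_series_inverse:
  fixes w :: "'a::{banach, real_normed_algebra_1}"
  assumes "summable (\<lambda>n. w ^ n)"
  shows "(1 - w) * (\<Sum>n. w ^ n) = 1" "(\<Sum>n. w ^ n) * (1 - w) = 1"
proof -
  have tel: "(\<lambda>n. w ^ n - w ^ Suc n) sums 1"
    using telescope_sums'[OF summable_LIMSEQ_zero[OF assms]] by simp
  have "(\<lambda>n. (1 - w) * w ^ n) sums ((1 - w) * (\<Sum>n. w ^ n))"
    using summable_sums[OF assms] by (rule sums_mult)
  also have "(\<lambda>n. (1 - w) * w ^ n) = (\<lambda>n. w ^ n - w ^ Suc n)"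
    by (simp add: algebra_simps)
  finally show "(1 - w) * (\<Sum>n. w ^ n) = 1"
    using tel by (rule sums_unique2)
  have "(\<lambda>n. w ^ n * (1 - w)) sums ((\<Sum>n. w ^ n) * (1 - w))"
    using summable_sums[OF assms] by (rule sums_mult2)
  also have "(\<lambda>n. w ^ n * (1 - w)) = (\<lambda>n. w ^ n - w ^ Suc n)"
    by (simp add: right_diff_distrib power_commutes)
  finally show "(\<Sum>n. w ^ n) * (1 - w) = 1"
    using tel by (rule sums_unique2)
qed

lemma fast_decay_imp_quasinilpotent:
  fixes u :: "'a::cbanach_star_algebra"
  assumes "fast_decay (\<lambda>n. u ^ n)"
  shows "quasinilpotent u"
  unfolding quasinilpotent_def invertible_el_def
proof (intro allI impI)
  fix l :: complex assume "l \<noteq> 0"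
  define w where "w = scaleC (inverse l) u"
  have "norm (w ^ n) \<le> 1 * (inverse (cmod l) ^ n * norm (u ^ n))" for n
    by (simp add: w_def scaleC_power norm_scaleC norm_power norm_inverse)
  then have "summable (\<lambda>n. w ^ n)"
    by (intro fast_decay_imp_summable fast_decay_dominated[OF assms, of "inverse (cmod l)" _ 1]) auto
  note inv = geometric_series_inverse[OF this]
  have eq: "scaleC l 1 - u = scaleC l (1 - w)"
    using \<open>l \<noteq> 0\<close> by (simp add: w_def scaleC_diff_right scaleC_scaleC scaleC_one)
  show "\<exists>y. y * (scaleC l 1 - u) = 1 \<and> (scaleC l 1 - u) * y = 1"
    using \<open>l \<noteq> 0\<close> inv
    by (intro exI[of _ "scaleC (inverse l) (\<Sum>n. w ^ n)"])
       (simp add: eq scaleC_mult_left scaleC_mult_right scaleC_scaleC scaleC_one)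
qed

lemma quasinilpotent_invertible_one_minus:
  fixes u :: "'a::cbanach_star_algebra"
  assumes "quasinilpotent u"
  shows "invertible_el (1 - scaleC \<mu> u)"
proof (cases "\<mu> = 0")
  case True
  then show ?thesis by (auto simp: invertible_el_def)
next
  case False
  then obtain r where r: "r * (scaleC (inverse \<mu>) 1 - u) = 1" "(scaleC (inverse \<mu>) 1 - u) * r = 1"
    using assms unfolding quasinilpotent_def invertible_el_def by (meson inverse_nonzero_iff_nonzero)
  have eq: "1 - scaleC \<mu> u = scaleC \<mu> (scaleC (inverse \<mu>) 1 - u)"
    using False by (simp add: scaleC_diff_right scaleC_scaleC scaleC_one)
  show ?thesis
    unfolding invertible_el_def eq using r False
    by (intro exI[of _ "scaleC (inverse \<mu>) r"])
       (simp add: scaleC_mult_left scaleC_mult_right scaleC_scaleC scaleC_one)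
qed

definition inv_el :: "'a::cbanach_star_algebra \<Rightarrow> 'a" where
  "inv_el z = (SOME y. y * z = 1 \<and> z * y = 1)"

lemma inv_el:
  assumes "invertible_el z"
  shows "inv_el z * z = 1" "z * inv_el z = 1"
  using someI_ex[OF assms[unfolded invertible_el_def]] by (simp_all add: inv_el_def)

definition resolvent :: "'a::cbanach_star_algebra \<Rightarrow> complex \<Rightarrow> 'a" where
  "resolvent u \<mu> = inv_el (1 - scaleC \<mu> u)"

definition unit_root :: "nat \<Rightarrow> complex" where
  "unit_root n = exp (2 * of_real pi * \<i> / of_nat n)"

lemma unit_root_power_eq_1_iff:
  assumes "n > 0"
  shows "unit_root n ^ m = 1 \<longleftrightarrow> n dvd m"
proof -
  have "unit_root n ^ m = exp (2 * of_real pi * \<i> * of_nat m / of_nat n)"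
    unfolding unit_root_def by (simp add: exp_of_nat_mult[symmetric] mult.commute)
  then show ?thesis
    using complex_root_unity_eq_1[of n m] assms by simp
qed

lemma norm_unit_root_power [simp]: "cmod (unit_root n ^ k) = 1"
  by (simp add: unit_root_def norm_power)

lemma sum_unit_root_powers:
  assumes "n > 0" "\<not> n dvd m"
  shows "(\<Sum>k<n. (unit_root n ^ k) ^ m) = 0"
proof -
  have "(\<Sum>k<n. (unit_root n ^ k) ^ m) = (\<Sum>k<n. (unit_root n ^ m) ^ k)"
    by (simp add: power_mult[symmetric] mult.commute)
  also have "\<dots> = ((unit_root n ^ m) ^ n - 1) / (unit_root n ^ m - 1)"
    using assms unit_root_power_eq_1_iff by (intro geometric_sum) auto
  also have "(unit_root n ^ m) ^ n = (unit_root n ^ n) ^ m"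
    by (simp only: power_mult[symmetric] mult.commute)
  also have "\<dots> = 1"
    using assms unit_root_power_eq_1_iff[of n n] by simp
  finally show ?thesis by simp
qed

definition avg_resolvent :: "'a::cbanach_star_algebra \<Rightarrow> nat \<Rightarrow> complex \<Rightarrow> 'a" where
  "avg_resolvent u n \<mu> = scaleR (1 / real n) (\<Sum>k<n. resolvent u (unit_root n ^ k * \<mu>))"

lemma one_minus_mult_sum_powers:
  fixes x :: "'a::ring_1"
  shows "(1 - x) * (\<Sum>i<n. x ^ i) = 1 - x ^ n"
proof (induction n)
  case (Suc n)
  have "(1 - x) * (\<Sum>i<Suc n. x ^ i) = (1 - x) * (\<Sum>i<n. x ^ i) + (x ^ n - x ^ Suc n)"
    by (simp add: algebra_simps)
  then show ?case
    by (simp add: Suc.IH)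
qed simp

context
  fixes u :: "'a::cbanach_star_algebra"
  assumes qn: "quasinilpotent u"
begin

lemma resolvent_inverse:
  "resolvent u \<mu> * (1 - scaleC \<mu> u) = 1" "(1 - scaleC \<mu> u) * resolvent u \<mu> = 1"
  using inv_el[OF quasinilpotent_invertible_one_minus[OF qn]] by (simp_all add: resolvent_def)

lemma resolvent_diff:
  "resolvent u \<mu> - resolvent u \<nu> = scaleC (\<mu> - \<nu>) (resolvent u \<mu> * u * resolvent u \<nu>)"
proof -
  let ?a = "resolvent u \<mu>" and ?b = "resolvent u \<nu>"
  have "?a - ?b = ?a * ((1 - scaleC \<nu> u) * ?b) - (?a * (1 - scaleC \<mu> u)) * ?b"
    by (simp add: resolvent_inverse)
  also have "\<dots> = ?a * ((1 - scaleC \<nu> u) - (1 - scaleC \<mu> u)) * ?b"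
    by (simp add: algebra_simps)
  also have "(1 - scaleC \<nu> u) - (1 - scaleC \<mu> u) = scaleC (\<mu> - \<nu>) u"
    by (simp add: scaleC_diff_left)
  finally show ?thesis
    by (simp add: scaleC_mult_left scaleC_mult_right)
qed

lemma norm_resolvent_diff_le:
  "norm (resolvent u \<mu> - resolvent u \<nu>)
     \<le> cmod (\<mu> - \<nu>) * (norm (resolvent u \<mu>) * norm u * norm (resolvent u \<nu>))"
proof -
  have "norm (resolvent u \<mu> - resolvent u \<nu>) = cmod (\<mu> - \<nu>) * norm (resolvent u \<mu> * u * resolvent u \<nu>)"
    by (simp only: resolvent_diff norm_scaleC)
  also have "\<dots> \<le> cmod (\<mu> - \<nu>) * (norm (resolvent u \<mu>) * norm u * norm (resolvent u \<nu>))"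
    by (intro mult_left_mono norm_mult3_le) simp
  finally show ?thesis .
qed

lemma isCont_resolvent: "isCont (resolvent u) \<nu>"
proof -
  define a where "a = norm (resolvent u \<nu>)"
  have lim: "((\<lambda>x. x - \<nu>) \<longlongrightarrow> 0) (at \<nu>)"
    by (rule LIM_zero[OF tendsto_ident_at])
  then have "((\<lambda>x. cmod (x - \<nu>) * (norm u * a)) \<longlongrightarrow> 0) (at \<nu>)"
    by (intro tendsto_mult_left_zero tendsto_norm_zero)
  then have "eventually (\<lambda>x. cmod (x - \<nu>) * (norm u * a) < 1/2) (at \<nu>)"
    by (rule order_tendstoD(2)) simp
  then have "eventually (\<lambda>x. norm (resolvent u x - resolvent u \<nu>) \<le> norm (x - \<nu>) * (2 * a * norm u * a)) (at \<nu>)"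
  proof eventually_elim
    case (elim x)
    define R where "R = norm (resolvent u x)"
    define t where "t = cmod (x - \<nu>) * (norm u * a)"
    have t: "0 \<le> t" "t < 1/2"
      using elim by (simp_all add: t_def a_def)
    have diff: "norm (resolvent u x - resolvent u \<nu>) \<le> R * t"
      using norm_resolvent_diff_le[of x \<nu>] by (simp add: R_def a_def t_def ac_simps)
    have "R * t \<le> R * (1/2)"
      using t by (intro mult_left_mono) (simp_all add: R_def)
    moreover have "R - a \<le> norm (resolvent u x - resolvent u \<nu>)"
      unfolding R_def a_def by (rule norm_triangle_ineq2)
    ultimately have "R \<le> 2 * a"
      using diff by linarith
    then have "R * t \<le> (2 * a) * t"
      using t by (intro mult_right_mono) simp_all
    with diff show ?case
      by (simp add: t_def ac_simps)
  qed
  then have "((\<lambda>x. resolvent u x - resolvent u \<nu>) \<longlongrightarrow> 0) (at \<nu>)"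
    by (rule tendsto_0_le[OF lim])
  then show ?thesis
    unfolding isCont_def by (rule LIM_zero_cancel)
qed

lemma resolvent_bounded:
  obtains C where "C > 0" "\<And>\<mu>. cmod \<mu> \<le> M \<Longrightarrow> norm (resolvent u \<mu>) \<le> C"
proof -
  have "compact (resolvent u ` cball 0 M)"
    by (intro compact_continuous_image continuous_at_imp_continuous_on ballI isCont_resolvent)
       simp
  then obtain C where "C > 0" "\<forall>y\<in>resolvent u ` cball 0 M. norm y \<le> C"
    using compact_imp_bounded bounded_pos by metis
  then show ?thesis
    using that[of C] by auto
qed

lemma resolvent_mult_one_minus_power:
  "resolvent u v * (1 - scaleC (v ^ n) (u ^ n)) = (\<Sum>m<n. scaleC (v ^ m) (u ^ m))"
proof -
  have "1 - scaleC (v ^ n) (u ^ n) = (1 - scaleC v u) * (\<Sum>m<n. scaleC v u ^ m)"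
    using one_minus_mult_sum_powers[of "scaleC v u" n] by (simp add: scaleC_power)
  then have "resolvent u v * (1 - scaleC (v ^ n) (u ^ n))
      = (resolvent u v * (1 - scaleC v u)) * (\<Sum>m<n. scaleC v u ^ m)"
    by (simp add: mult.assoc)
  then show ?thesis
    by (simp add: resolvent_inverse scaleC_power)
qed

text \<open>Averaging over the \<open>n\<close>-th roots of unity kills all terms but the first one of
  \<open>resolvent_mult_one_minus_power\<close>, so the average inverts \<open>1 - \<mu>\<^sup>n u\<^sup>n\<close>.\<close>

lemma avg_resolvent_inverse:
  assumes "n > 0"
  shows "avg_resolvent u n \<mu> * (1 - scaleC (\<mu> ^ n) (u ^ n)) = 1"
proof -
  have root_pow: "(unit_root n ^ k * \<mu>) ^ n = \<mu> ^ n" for k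
  proof -
    have "(unit_root n ^ k) ^ n = (unit_root n ^ n) ^ k"
      by (simp only: power_mult[symmetric] mult.commute)
    then show ?thesis
      using assms unit_root_power_eq_1_iff[of n n] by (simp add: power_mult_distrib)
  qed
  have "(\<Sum>k<n. resolvent u (unit_root n ^ k * \<mu>)) * (1 - scaleC (\<mu> ^ n) (u ^ n))
      = (\<Sum>k<n. \<Sum>m<n. scaleC ((unit_root n ^ k * \<mu>) ^ m) (u ^ m))"
    using resolvent_mult_one_minus_power[of "unit_root n ^ _ * \<mu>" n]
    by (simp add: sum_distrib_right root_pow)
  also have "\<dots> = (\<Sum>m<n. scaleC (\<Sum>k<n. (unit_root n ^ k * \<mu>) ^ m) (u ^ m))"
    by (subst sum.swap) (simp add: scaleC_sum_left)
  also have "\<dots> = (\<Sum>m<n. if m = 0 then of_nat n else 0)"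
  proof (intro sum.cong refl)
    fix m assume "m \<in> {..<n}"
    then have "m \<noteq> 0 \<Longrightarrow> \<not> n dvd m"
      by (auto dest: dvd_imp_le)
    then show "scaleC (\<Sum>k<n. (unit_root n ^ k * \<mu>) ^ m) (u ^ m) = (if m = 0 then of_nat n else 0)"
      using assms sum_unit_root_powers[of n m]
      by (simp add: scaleC_of_nat power_mult_distrib sum_distrib_right[symmetric])
  qed
  also have "\<dots> = of_nat n"
    using assms by simp
  also have "\<dots> = scaleR (real n) 1"
    by (metis of_real_def of_real_of_nat_eq)
  finally show ?thesis
    using assms by (simp add: avg_resolvent_def)
qed

end

lemma left_inverse_one_minus_near_one:
  fixes A x :: "'a::real_normed_algebra_1"
  assumes "A * (1 - x) = 1" "norm (A - 1) \<le> 1/2"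
  shows "norm x \<le> 1"
proof -
  have "x = (A - 1) * (1 - x)"
    using assms(1) by (simp add: algebra_simps)
  then have "norm x \<le> norm (A - 1) * norm (1 - x)"
    by (metis norm_mult_ineq)
  also have "\<dots> \<le> 1/2 * (1 + norm x)"
    using assms(2) norm_triangle_ineq4[of 1 x] by (intro mult_mono) auto
  finally show ?thesis by simp
qed

lemma tendsto_zero_below_radius:
  fixes a :: "nat \<Rightarrow> real"
  assumes "eventually (\<lambda>n. \<rho> ^ n * a n \<le> 1) sequentially" "\<And>n. 0 \<le> a n" "0 \<le> r" "r < \<rho>"
  shows "(\<lambda>n. r ^ n * a n) \<longlonglongrightarrow> 0"
proof -
  have bound: "eventually (\<lambda>n. norm (r ^ n * a n) \<le> norm ((r / \<rho>) ^ n) * 1) sequentially"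
    using assms(1)
  proof eventually_elim
    case (elim n)
    have "r ^ n * a n = (r / \<rho>) ^ n * (\<rho> ^ n * a n)"
      using assms(3,4) by (simp add: power_divide)
    also have "\<dots> \<le> (r / \<rho>) ^ n * 1"
      using elim assms(3,4) by (intro mult_left_mono) auto
    finally show ?case
      using assms by simp
  qed
  show ?thesis
    by (rule tendsto_0_le[OF _ bound], rule LIMSEQ_power_zero) (use assms(3,4) in simp)
qed

context
  fixes u :: "'a::cbanach_star_algebra" and M C :: real
  assumes resolvent_le: "\<And>\<mu>. cmod \<mu> \<le> M \<Longrightarrow> norm (resolvent u \<mu>) \<le> C"
begin

lemma norm_avg_resolvent_le:
  assumes "n > 0" "cmod \<mu> \<le> M"
  shows "norm (avg_resolvent u n \<mu>) \<le> C"
proof -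
  have "norm (\<Sum>k<n. resolvent u (unit_root n ^ k * \<mu>)) \<le> (\<Sum>k<n. C)"
    using assms(2) by (intro order_trans[OF norm_sum] sum_mono resolvent_le) (simp add: norm_mult)
  then show ?thesis
    using assms(1) by (simp add: avg_resolvent_def divide_simps mult.commute)
qed

lemma norm_avg_resolvent_diff_le:
  assumes qn: "quasinilpotent u" and "n > 0" "cmod \<mu> \<le> M" "cmod \<nu> \<le> M"
  shows "norm (avg_resolvent u n \<mu> - avg_resolvent u n \<nu>) \<le> cmod (\<mu> - \<nu>) * (C * norm u * C)"
proof -
  have C: "0 \<le> C"
    using resolvent_le[of \<mu>] assms(3) norm_ge_zero order_trans by blast
  have each: "norm (resolvent u (unit_root n ^ k * \<mu>) - resolvent u (unit_root n ^ k * \<nu>))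
      \<le> cmod (\<mu> - \<nu>) * (C * norm u * C)" for k
  proof -
    have "cmod (unit_root n ^ k * \<mu> - unit_root n ^ k * \<nu>) = cmod (\<mu> - \<nu>)"
      by (simp add: right_diff_distrib[symmetric] norm_mult)
    moreover have "norm (resolvent u (unit_root n ^ k * \<mu>)) * norm u * norm (resolvent u (unit_root n ^ k * \<nu>))
        \<le> C * norm u * C"
      using assms(3,4) C by (intro mult_mono resolvent_le) (auto simp: norm_mult)
    ultimately show ?thesis
      using norm_resolvent_diff_le[OF qn, of "unit_root n ^ k * \<mu>" "unit_root n ^ k * \<nu>"]
      by (metis mult_left_mono norm_ge_zero order_trans)
  qed
  have "avg_resolvent u n \<mu> - avg_resolvent u n \<nu>
      = scaleR (1 / real n) (\<Sum>k<n. resolvent u (unit_root n ^ k * \<mu>) - resolvent u (unit_root n ^ k * \<nu>))"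
    by (simp add: avg_resolvent_def sum_subtractf scaleR_diff_right)
  then have "norm (avg_resolvent u n \<mu> - avg_resolvent u n \<nu>)
      = (1 / real n) * norm (\<Sum>k<n. resolvent u (unit_root n ^ k * \<mu>) - resolvent u (unit_root n ^ k * \<nu>))"
    by simp
  also have "\<dots> \<le> (1 / real n) * (real n * (cmod (\<mu> - \<nu>) * (C * norm u * C)))"
    using order_trans[OF norm_sum sum_mono[of "{..<n}", OF each]] by (intro mult_left_mono) simp_all
  also have "\<dots> = cmod (\<mu> - \<nu>) * (C * norm u * C)"
    using assms(2) by simp
  finally show ?thesis .
qed

lemma norm_avg_resolvent_minus_one_le:
  assumes qn: "quasinilpotent u" and "n > 0" "0 \<le> \<rho>" "\<rho> \<le> M"
  shows "norm (avg_resolvent u n (of_real \<rho>) - 1) \<le> C * (\<rho> ^ n * norm (u ^ n))"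
proof -
  let ?A = "avg_resolvent u n (of_real \<rho>)"
  have "?A - 1 = ?A * scaleC (of_real \<rho> ^ n) (u ^ n)"
    using avg_resolvent_inverse[OF qn \<open>n > 0\<close>, of "of_real \<rho>"] by (simp add: algebra_simps)
  then have "norm (?A - 1) \<le> norm ?A * norm (scaleC (of_real \<rho> ^ n) (u ^ n))"
    by (simp add: norm_mult_ineq)
  also have "\<dots> = norm ?A * (\<rho> ^ n * norm (u ^ n))"
    using assms(3) by (simp add: norm_scaleC norm_power)
  also have "\<dots> \<le> C * (\<rho> ^ n * norm (u ^ n))"
    using assms by (intro mult_right_mono norm_avg_resolvent_le) auto
  finally show ?thesis .
qed

text \<open>The radius up to which the powers of \<open>u\<close> are eventually bounded grows in steps
  of a fixed size: near a good radius the averaged resolvent is close to \<open>1\<close>, and it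
  moves by a uniformly (in \<open>n\<close>) bounded amount when the radius moves.\<close>

lemma eventually_power_bound_step:
  assumes qn: "quasinilpotent u"
    and good: "eventually (\<lambda>n. \<rho> ^ n * norm (u ^ n) \<le> 1) sequentially"
    and "0 < \<rho>" "\<rho> \<le> \<rho>1" "\<rho>1 \<le> M" "\<rho>1 \<le> \<rho> + \<delta> / 2"
    and "\<delta> > 0" "C * norm u * C * \<delta> \<le> 1/4"
  shows "eventually (\<lambda>n. \<rho>1 ^ n * norm (u ^ n) \<le> 1) sequentially"
proof -
  define \<rho>' where "\<rho>' = max (\<rho> - \<delta> / 2) (\<rho> / 2)"
  have \<rho>': "0 < \<rho>'" "\<rho>' < \<rho>" "\<rho>1 - \<rho>' \<le> \<delta>"
    using assms by (auto simp: \<rho>'_def)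
  have "0 \<le> C"
    using resolvent_le[of 0] assms order_trans[OF norm_ge_zero] by auto
  then have L: "0 \<le> C * norm u * C"
    by simp
  have "(\<lambda>n. \<rho>' ^ n * norm (u ^ n)) \<longlonglongrightarrow> 0"
    using good \<rho>' by (intro tendsto_zero_below_radius) auto
  then have "(\<lambda>n. C * (\<rho>' ^ n * norm (u ^ n))) \<longlonglongrightarrow> C * 0"
    by (rule tendsto_mult_left)
  then have "eventually (\<lambda>n. C * (\<rho>' ^ n * norm (u ^ n)) < 1/4) sequentially"
    by (rule order_tendstoD(2)) simp
  moreover have "eventually (\<lambda>n. n > 0) sequentially"
    by (rule eventually_gt_at_top)
  ultimately show ?thesis
  proof eventually_elim
    case (elim n)
    let ?A = "avg_resolvent u n"
    have "norm (?A (of_real \<rho>1) - ?A (of_real \<rho>')) \<le> (\<rho>1 - \<rho>') * (C * norm u * C)"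
      using norm_avg_resolvent_diff_le[OF qn, of n "of_real \<rho>1" "of_real \<rho>'"] elim assms \<rho>'
      by (simp flip: of_real_diff)
    also have "\<dots> \<le> \<delta> * (C * norm u * C)"
      using \<rho>' L by (intro mult_right_mono) auto
    also have "\<dots> \<le> 1/4"
      using assms by (simp add: mult.commute)
    finally have "norm (?A (of_real \<rho>1) - 1) \<le> 1/2"
      using norm_avg_resolvent_minus_one_le[OF qn, of n \<rho>'] elim assms \<rho>'
        norm_triangle_ineq[of "?A (of_real \<rho>1) - ?A (of_real \<rho>')" "?A (of_real \<rho>') - 1"]
      by simp
    then have "norm (scaleC (of_real \<rho>1 ^ n) (u ^ n)) \<le> 1"
      by (rule left_inverse_one_minus_near_one[OF avg_resolvent_inverse[OF qn \<open>n > 0\<close>]])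
    then show ?case
      using assms by (simp add: norm_scaleC norm_power)
  qed
qed

end

lemma real_creep_induct:
  fixes P :: "real \<Rightarrow> bool"
  assumes "P a" "0 < a" "a \<le> b" "d > 0"
    and step: "\<And>x y. P x \<Longrightarrow> 0 < x \<Longrightarrow> x \<le> y \<Longrightarrow> y \<le> b \<Longrightarrow> y \<le> x + d \<Longrightarrow> P y"
  shows "P b"
proof -
  have "P (min b (a + real k * d))" for k
  proof (induction k)
    case 0
    then show ?case using assms(1,3) by (simp add: min_def)
  next
    case (Suc k)
    have kd: "0 \<le> real k * d" using assms(4) by simp
    show ?case
    proof (rule step[OF Suc])
      show "0 < min b (a + real k * d)" using assms(2,3) kd by linarith
      show "min b (a + real k * d) \<le> min b (a + real (Suc k) * d)"
        using assms(4) by (simp add: algebra_simps)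
      show "min b (a + real (Suc k) * d) \<le> min b (a + real k * d) + d"
        using assms(4) by (simp add: algebra_simps min_def)
    qed simp
  qed
  moreover obtain k where "b < real k * d"
    using ex_less_of_nat_mult[OF \<open>d > 0\<close>] by blast
  ultimately show ?thesis
    using assms(2) by (metis le_add_same_cancel2 less_eq_real_def min.absorb1 min_def order_less_le_trans)
qed

lemma quasinilpotent_eventually_power_bound:
  fixes u :: "'a::cbanach_star_algebra"
  assumes qn: "quasinilpotent u" and "M > 0"
  shows "eventually (\<lambda>n. M ^ n * norm (u ^ n) \<le> 1) sequentially"
proof -
  obtain C where "C > 0" and C: "\<And>\<mu>. cmod \<mu> \<le> M \<Longrightarrow> norm (resolvent u \<mu>) \<le> C"
    using resolvent_bounded[OF qn] by metis
  define \<delta> where "\<delta> = 1 / (4 * (C * norm u * C + 1))"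
  have "0 \<le> C * norm u * C"
    using \<open>C > 0\<close> by simp
  then have \<delta>: "\<delta> > 0" "C * norm u * C * \<delta> \<le> 1/4"
    by (simp_all add: \<delta>_def field_simps)
  define \<rho>0 where "\<rho>0 = min M (1 / (norm u + 1))"
  have "0 < norm u + 1"
    by (simp add: add_nonneg_pos)
  then have "\<rho>0 * norm u \<le> norm u / (norm u + 1)"
    by (intro order_trans[OF mult_right_mono[of \<rho>0 "1 / (norm u + 1)"]]) (simp_all add: \<rho>0_def)
  also have "\<dots> \<le> 1"
    using \<open>0 < norm u + 1\<close> by (simp add: field_simps)
  finally have \<rho>0: "0 < \<rho>0" "\<rho>0 \<le> M" "\<rho>0 * norm u \<le> 1"
    using \<open>M > 0\<close> \<open>0 < norm u + 1\<close> by (auto simp: \<rho>0_def)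
  have "\<rho>0 ^ n * norm (u ^ n) \<le> 1" for n
  proof -
    have "\<rho>0 ^ n * norm (u ^ n) \<le> \<rho>0 ^ n * norm u ^ n"
      using \<rho>0 by (intro mult_left_mono norm_power_ineq) simp
    also have "\<dots> = (\<rho>0 * norm u) ^ n"
      by (simp add: power_mult_distrib)
    also have "\<dots> \<le> 1"
      using \<rho>0 by (intro power_le_one) auto
    finally show ?thesis .
  qed
  then have "eventually (\<lambda>n. \<rho>0 ^ n * norm (u ^ n) \<le> 1) sequentially"
    by simp
  then show ?thesis
  proof (rule real_creep_induct[where d = "\<delta> / 2"])
    fix x y
    assume "eventually (\<lambda>n. x ^ n * norm (u ^ n) \<le> 1) sequentially"
      and "0 < x" "x \<le> y" "y \<le> M" "y \<le> x + \<delta> / 2"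
    then show "eventually (\<lambda>n. y ^ n * norm (u ^ n) \<le> 1) sequentially"
      using eventually_power_bound_step[OF C qn _ _ _ _ _ \<delta>] by blast
  qed (use \<rho>0 \<delta> in auto)
qed

lemma quasinilpotent_imp_fast_decay:
  fixes u :: "'a::cbanach_star_algebra"
  assumes "quasinilpotent u"
  shows "fast_decay (\<lambda>n. u ^ n)"
  unfolding fast_decay_def
proof (intro allI impI)
  fix B :: real assume "B \<ge> 0"
  have "eventually (\<lambda>n. (2 * B + 1) ^ n * norm (u ^ n) \<le> 1) sequentially"
    using \<open>B \<ge> 0\<close> by (intro quasinilpotent_eventually_power_bound[OF assms]) simp
  then have bound: "eventually (\<lambda>n. norm (B ^ n * norm (u ^ n)) \<le> norm ((1/2::real) ^ n) * 1) sequentially"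
  proof eventually_elim
    case (elim n)
    have "B ^ n * norm (u ^ n) = (B / (2 * B + 1)) ^ n * ((2 * B + 1) ^ n * norm (u ^ n))"
      using \<open>B \<ge> 0\<close> by (simp add: power_divide)
    also have "\<dots> \<le> (B / (2 * B + 1)) ^ n"
      using elim \<open>B \<ge> 0\<close> by (simp add: mult_left_le)
    also have "\<dots> \<le> (1/2) ^ n"
      using \<open>B \<ge> 0\<close> by (intro power_mono) (auto simp: field_simps)
    finally show ?case
      using \<open>B \<ge> 0\<close> by simp
  qed
  show "(\<lambda>n. B ^ n * norm (u ^ n)) \<longlonglongrightarrow> 0"
    by (rule tendsto_0_le[OF _ bound], rule LIMSEQ_power_zero) simp
qed

section \<open>The generalized Drazin inverse\<close>

lemma is_gdrazin_identities:
  assumes "is_gdrazin c y"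
  shows "c * y * (c * y) = c * y" "y * (c * y) = y" "c * y * y = y" "y * c = c * y"
    and "c * y * c = c * (c * y)"
  using assms unfolding is_gdrazin_def by (metis mult.assoc)+

lemma is_gdrazin_residual_fast_decay:
  assumes "is_gdrazin c y"
  shows "fast_decay (\<lambda>n. (c * (1 - c * y)) ^ n)"
proof -
  have "c - c * c * y = c * (1 - c * y)"
    by (simp add: algebra_simps mult.assoc)
  then show ?thesis
    using assms quasinilpotent_imp_fast_decay unfolding is_gdrazin_def by metis
qed

lemma gdrazin_off_diagonal_zero:
  assumes y: "is_gdrazin c y" and dc: "d * c = c * d"
  shows "(1 - c * y) * d * (c * y) = 0" "(c * y) * d * (1 - c * y) = 0"
proof -
  define e where "e = c * y"
  define p where "p = 1 - e"
  have dec: "fast_decay (\<lambda>n. (c * p) ^ n)"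
    using is_gdrazin_residual_fast_decay[OF y] by (simp add: p_def e_def)
  have ey: "e * y = y" and ye: "y * e = y" and yc: "y * c = e"
    using is_gdrazin_identities[OF y] by (simp_all add: e_def)
  have pp: "p * p = p"
    using is_gdrazin_identities(1)[OF y] by (simp add: p_def e_def algebra_simps)
  have pc: "p * c = c * p"
    using is_gdrazin_identities(5)[OF y] by (simp add: p_def e_def left_diff_distrib right_diff_distrib)
  have "(c * p) * (p * d * e) * y = c * (p * p) * d * (e * y)"
    by (simp only: mult.assoc)
  also have "\<dots> = (p * c) * d * y"
    by (simp only: pp ey pc)
  also have "\<dots> = p * (d * c) * y"
    by (simp only: dc mult.assoc)
  also have "\<dots> = p * d * e"
    by (simp only: e_def mult.assoc)
  finally have "p * d * e = (c * p) * (p * d * e) * y" ..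
  then show "(1 - c * y) * d * (c * y) = 0"
    unfolding p_def e_def by (rule fast_decay_power_absorb_left[OF dec[unfolded p_def e_def]])
  have "y * (e * d * p) * (c * p) = y * e * d * (p * c) * p"
    by (simp only: mult.assoc)
  also have "\<dots> = (y * e) * (d * c) * (p * p)"
    by (simp only: pc mult.assoc)
  also have "\<dots> = (y * c) * d * p"
    by (simp only: ye pp dc mult.assoc)
  also have "\<dots> = e * d * p"
    by (simp only: yc)
  finally have "e * d * p = y * (e * d * p) * (c * p)" ..
  then show "(c * y) * d * (1 - c * y) = 0"
    unfolding p_def e_def by (rule fast_decay_power_absorb_right[OF dec[unfolded p_def e_def]])
qed

lemma gdrazin_commute:
  assumes y: "is_gdrazin c y" and dc: "d * c = c * d"
  shows "d * (c * y) = (c * y) * d" "d * y = y * d"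
proof -
  define e where "e = c * y"
  have de: "d * e = e * d"
    using gdrazin_off_diagonal_zero[OF y dc] by (simp add: e_def algebra_simps)
  then show "d * (c * y) = (c * y) * d"
    by (simp add: e_def)
  have ey: "e * y = y" and ye: "y * e = y" and yc: "y * c = e"
    using is_gdrazin_identities[OF y] by (simp_all add: e_def)
  have "y * d = (y * e) * d"
    by (simp only: ye)
  also have "\<dots> = y * (d * e)"
    by (simp only: de mult.assoc)
  also have "\<dots> = y * (d * c) * y"
    by (simp only: e_def mult.assoc)
  also have "\<dots> = (y * c) * d * y"
    by (simp only: dc mult.assoc)
  also have "\<dots> = d * (e * y)"
    by (simp only: yc de[symmetric] mult.assoc)
  finally show "d * y = y * d"
    by (simp only: ey)
qed

lemma gdrazin_absorb:
  assumes y: "is_gdrazin c y" and z: "is_gdrazin c z"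
  shows "c * y * (c * z) = c * z"
proof -
  define p where "p = 1 - c * y"
  have dec: "fast_decay (\<lambda>n. (c * p) ^ n)"
    using is_gdrazin_residual_fast_decay[OF y] by (simp add: p_def)
  have pp: "p * p = p"
    using is_gdrazin_identities(1)[OF y] by (simp add: p_def algebra_simps)
  have pc: "p * c = c * p"
    using is_gdrazin_identities(5)[OF y] by (simp add: p_def left_diff_distrib right_diff_distrib)
  have "c * p * (p * (c * z)) * z = c * (p * p) * (c * z * z)"
    by (simp only: mult.assoc)
  also have "\<dots> = (p * c) * z"
    by (simp only: pp pc is_gdrazin_identities(3)[OF z])
  finally have "p * (c * z) = c * p * (p * (c * z)) * z"
    by (simp only: mult.assoc)
  then have "p * (c * z) = 0"
    by (rule fast_decay_power_absorb_left[OF dec])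
  then show ?thesis
    by (simp add: p_def algebra_simps)
qed

lemma gdrazin_unique:
  assumes y: "is_gdrazin c y" and z: "is_gdrazin c z"
  shows "y = z"
proof -
  have "c * z * c = c * (c * z)"
    using is_gdrazin_identities(5)[OF z] .
  then have "c * z * (c * y) = c * y * (c * z)"
    by (rule gdrazin_commute(1)[OF y])
  then have e: "c * y = c * z"
    using gdrazin_absorb[OF y z] gdrazin_absorb[OF z y] by simp
  have "y = y * (c * y)"
    using is_gdrazin_identities(2)[OF y] by simp
  also have "\<dots> = (y * c) * z"
    by (simp add: e mult.assoc)
  also have "\<dots> = c * z * z"
    using is_gdrazin_identities(4)[OF y] e by simp
  also have "\<dots> = z"
    by (rule is_gdrazin_identities(3)[OF z])
  finally show ?thesis .
qed

lemma gdrazin_eq: "is_gdrazin c y \<Longrightarrow> gdrazin c = y"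
  unfolding gdrazin_def by (blast intro: gdrazin_unique)

lemma power_mult_power_Suc_absorb:
  fixes c g :: "'a::monoid_mult"
  assumes "c * g * g = g"
  shows "c ^ n * g ^ Suc n = g"
proof (induction n)
  case (Suc n)
  have "c ^ Suc n * g ^ Suc (Suc n) = c ^ n * (c * g * g) * g ^ n"
    by (simp only: power_Suc2[of c] power_Suc[of g] mult.assoc)
  also have "\<dots> = c ^ n * g ^ Suc n"
    by (simp only: assms power_Suc mult.assoc[symmetric])
  finally show ?case
    using Suc by simp
qed simp

lemma core_identities:
  fixes c g :: "'a::cbanach_star_algebra"
  assumes cgg: "c * g * g = g" and dec: "fast_decay (\<lambda>n. (1 - g * c) * c ^ n)"
  shows "g * c * g = g" "g * c * (c * g) = c * g"
proof -
  have "(1 - g * c) * g = (1 - g * c) * c ^ n * 1 * g ^ n * g" for n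
    using power_mult_power_Suc_absorb[OF cgg, of n] by (simp add: mult.assoc power_commutes)
  then have "(1 - g * c) * g = 0"
    by (rule fast_decay_mult_power_zero[OF dec])
  then show "g * c * g = g"
    by (simp add: algebra_simps)
  have "(1 - g * c) * (c * g) = (1 - g * c) * c ^ n * c * g ^ n * g" for n
    using power_mult_power_Suc_absorb[OF cgg, of n]
    by (simp add: mult.assoc power_Suc2 power_commutes)
  then have "(1 - g * c) * (c * g) = 0"
    by (rule fast_decay_mult_power_zero[OF dec])
  then show "g * c * (c * g) = c * g"
    by (simp add: algebra_simps)
qed

lemma sylvester_series:
  fixes A B N h f :: "'a::cbanach_star_algebra"
  assumes dec: "fast_decay (\<lambda>n. N ^ n)" and Ah: "A * h = f" and fh: "f * h = h"
    and Bf: "B * f = 0" and Nf: "N * f = 0"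
  defines "X \<equiv> (\<Sum>n. h ^ Suc (Suc n) * B * N ^ n)"
  shows "A * X = h * B + X * N" "f * X = X" "X * f = 0"
proof -
  define T where "T n = h ^ Suc (Suc n) * B * N ^ n" for n
  have "norm (T n) \<le> (norm h ^ 2 * norm B) * (norm h ^ n * norm (N ^ n))" for n
  proof -
    have "norm (T n) \<le> norm (h ^ Suc (Suc n)) * norm B * norm (N ^ n)"
      unfolding T_def by (rule norm_mult3_le)
    also have "\<dots> \<le> norm h ^ Suc (Suc n) * norm B * norm (N ^ n)"
      by (intro mult_right_mono norm_power_ineq) simp_all
    finally show ?thesis
      by (simp add: power2_eq_square ac_simps)
  qed
  then have sT: "summable T"
    by (intro fast_decay_imp_summable fast_decay_dominated[OF dec norm_ge_zero])
  have fhp: "f * h ^ Suc m = h ^ Suc m" for m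
    using fh by (simp add: mult.assoc[symmetric])
  have "f * X = (\<Sum>n. f * T n)"
    unfolding X_def T_def[symmetric] by (rule suminf_mult[OF sT, symmetric])
  also have "(\<lambda>n. f * T n) = T"
    by (rule ext) (simp only: T_def mult.assoc[symmetric] fhp)
  finally show "f * X = X"
    by (simp add: X_def T_def)
  have "B * N ^ n * f = 0" for n
    using Bf Nf by (cases n) (simp_all add: power_Suc2 mult.assoc del: power_Suc)
  then have "(\<lambda>n. T n * f) = (\<lambda>n. 0)"
    by (simp add: T_def mult.assoc)
  moreover have "X * f = (\<Sum>n. T n * f)"
    unfolding X_def T_def[symmetric] by (rule suminf_mult2[OF sT])
  ultimately show "X * f = 0"
    by simp
  define a where "a n = h ^ Suc n * B * N ^ n" for n
  have "A * h ^ Suc (Suc n) = h ^ Suc n" for n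
    by (metis Ah fhp mult.assoc power_Suc)
  then have AT: "(\<lambda>n. A * T n) = a"
    by (intro ext) (simp add: T_def a_def mult.assoc[symmetric] del: power_Suc)
  have TN: "(\<lambda>n. T n * N) = (\<lambda>n. a (Suc n))"
    by (intro ext) (simp add: T_def a_def mult.assoc power_commutes)
  have sa: "summable a"
    using summable_mult[OF sT, of A] unfolding AT .
  have "A * X = suminf a"
    unfolding X_def T_def[symmetric] using suminf_mult[OF sT, of A] AT by simp
  moreover have "X * N = suminf a - a 0"
    unfolding X_def T_def[symmetric] using suminf_mult2[OF sT, of N] TN suminf_split_head[OF sa]
    by simp
  ultimately show "A * X = h * B + X * N"
    by (simp add: a_def)
qed

lemma gdrazin_block:
  fixes c f h X :: "'a::ring_1"
  assumes ff: "f * f = f" and cf: "f * c * f = c * f" and fh: "f * h = h"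
    and ch: "c * h = f" and hcf: "h * c * f = f" and fX: "f * X = X" and Xf: "X * f = 0"
    and syl: "c * X = h * (c * (1 - f)) + X * ((1 - f) * c)"
  defines "y \<equiv> h + X" and "U \<equiv> f * c * (1 - f) - c * c * X" and "N \<equiv> (1 - f) * c"
  shows "c * y = y * c" "y * c * y = y" "c * y * f = f" "f * (c * y) = c * y"
    and "c - c * c * y = U + N" "U * U = 0" "N * U = 0"
proof -
  have f_c_absorb: "f * (c * Z) = c * Z" if "f * Z = Z" for Z
  proof -
    have "f * (c * Z) = (f * c * f) * Z"
      by (simp only: that mult.assoc)
    also have "\<dots> = (c * f) * Z"
      by (simp only: cf)
    also have "\<dots> = c * Z"
      by (simp only: that mult.assoc)
    finally show ?thesis .
  qed
  have Xh: "X * h = 0"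
    by (metis Xf fh mult.assoc mult_zero_left)
  have XX: "X * X = 0"
    by (metis Xf fX mult.assoc mult_zero_left)
  have cX: "c * X = h * c - f + X * c"
    using syl by (simp add: right_diff_distrib left_diff_distrib mult.assoc[symmetric] hcf Xf)
  have cy: "c * y = f + c * X"
    by (simp add: y_def distrib_left ch)
  then show yc: "c * y = y * c"
    by (simp add: y_def distrib_right cX algebra_simps)
  have "y * c * y = (c * y) * y"
    by (simp only: yc)
  also have "\<dots> = (f + c * X) * (h + X)"
    unfolding cy by (simp only: y_def)
  also have "\<dots> = f * h + f * X + c * (X * h) + c * (X * X)"
    by (simp add: algebra_simps)
  finally show "y * c * y = y"
    by (simp add: fh fX Xh XX y_def)
  show "c * y * f = f"
    by (simp add: cy distrib_right ff mult.assoc Xf)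
  have fcX: "f * (c * X) = c * X"
    by (rule f_c_absorb[OF fX])
  then show "f * (c * y) = c * y"
    by (simp add: cy distrib_left ff)
  have "c * c * y = c * f + c * c * X"
    by (simp add: mult.assoc cy distrib_left)
  then show "c - c * c * y = U + N"
    using cf by (simp add: U_def N_def algebra_simps)
  have Uf: "U * f = 0"
    by (simp add: U_def left_diff_distrib right_diff_distrib mult.assoc ff Xf)
  have fU: "f * U = U"
    using f_c_absorb[OF fcX] ff by (simp add: U_def right_diff_distrib mult.assoc[symmetric])
  show "U * U = 0"
    by (metis Uf fU mult.assoc mult_zero_left)
  have "(1 - f) * c * f = 0"
    using cf by (simp add: left_diff_distrib)
  then show "N * U = 0"
    by (metis N_def fU mult.assoc mult_zero_left)
qed

lemma power_Suc_add_nilpotent: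
  fixes U N :: "'a::ring_1"
  assumes "U * U = 0" "N * U = 0"
  shows "(U + N) ^ Suc n = U * N ^ n + N ^ Suc n"
proof (induction n)
  case (Suc n)
  have "(U + N) ^ Suc (Suc n) = (U + N) * (U + N) ^ Suc n"
    by (rule power_Suc)
  also have "\<dots> = (U + N) * (U * N ^ n + N ^ Suc n)"
    by (simp only: Suc.IH)
  also have "\<dots> = (U * U) * N ^ n + U * N ^ Suc n + (N * U) * N ^ n + N * N ^ Suc n"
    by (simp add: algebra_simps)
  finally show ?case
    using assms by simp
qed simp

lemma power_Suc_corner:
  fixes c f :: "'a::ring_1"
  assumes "f * c * f = c * f"
  shows "((1 - f) * c) ^ Suc n = (1 - f) * c ^ Suc n"
proof (induction n)
  case (Suc n)
  have "((1 - f) * c) ^ Suc (Suc n) = (1 - f) * c * ((1 - f) * c ^ Suc n)"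
    by (simp only: power_Suc[of _ "Suc n"] Suc)
  also have "\<dots> = (1 - f) * c * c ^ Suc n - ((1 - f) * c * f) * c ^ Suc n"
    by (simp add: algebra_simps)
  also have "(1 - f) * c * f = 0"
    using assms by (simp add: left_diff_distrib)
  finally show ?case
    by (simp add: mult.assoc)
qed simp

lemma fast_decay_power_add_nilpotent:
  fixes U N :: "'a::real_normed_algebra_1"
  assumes dec: "fast_decay (\<lambda>n. N ^ n)" and "U * U = 0" "N * U = 0"
  shows "fast_decay (\<lambda>n. (U + N) ^ n)"
proof -
  have "fast_decay (\<lambda>n. U * N ^ n)"
    using norm_mult_ineq by (intro fast_decay_dominated[OF dec, of 1 _ "norm U"]) auto
  moreover have "fast_decay (\<lambda>n. N ^ Suc n)"
    using dec by (simp only: fast_decay_Suc_iff[of "\<lambda>n. N ^ n"])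
  moreover have "norm ((U + N) ^ Suc n) \<le> norm (U * N ^ n) + norm (N ^ Suc n)" for n
    using power_Suc_add_nilpotent[OF assms(2,3), of n] by (simp add: norm_triangle_ineq)
  ultimately have "fast_decay (\<lambda>n. (U + N) ^ Suc n)"
    by (rule fast_decay_add)
  then show ?thesis
    by (simp only: fast_decay_Suc_iff[of "\<lambda>n. (U + N) ^ n"])
qed

lemma gdrazin_exists:
  fixes c g :: "'a::cbanach_star_algebra"
  assumes cgg: "c * g * g = g" and dec: "fast_decay (\<lambda>n. (1 - g * c) * c ^ n)"
  obtains y where "is_gdrazin c y" "c * y * (g * c) = g * c" "g * c * (c * y) = c * y"
proof -
  note core = core_identities[OF cgg dec]
  define f where "f = g * c"
  define h where "h = g * f"
  define N where "N = (1 - f) * c"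
  have ff: "f * f = f"
    using core(1) by (simp add: f_def mult.assoc[symmetric])
  have cf: "f * c * f = c * f"
    using arg_cong[OF core(2), of "\<lambda>x. x * c"] by (simp add: f_def mult.assoc)
  have fh: "f * h = h"
    using core(1) by (simp add: f_def h_def mult.assoc[symmetric])
  have ch: "c * h = f"
    using cgg by (simp add: f_def h_def mult.assoc[symmetric])
  have hcf: "h * c * f = f"
    using cf ff by (simp add: h_def f_def mult.assoc)
  have Nf: "N * f = 0"
    using cf by (simp add: N_def left_diff_distrib)
  have "fast_decay (\<lambda>n. N ^ Suc n)"
    using dec power_Suc_corner[OF cf] unfolding N_def f_def
    by (simp only: fast_decay_Suc_iff[of "\<lambda>n. (1 - g * c) * c ^ n"])
  then have decN: "fast_decay (\<lambda>n. N ^ n)"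
    by (simp only: fast_decay_Suc_iff[of "\<lambda>n. N ^ n"])
  have "c * (1 - f) * f = 0"
    using ff by (simp add: mult.assoc left_diff_distrib)
  note X = sylvester_series[OF decN ch fh this Nf]
  define X where "X = (\<Sum>n. h ^ Suc (Suc n) * (c * (1 - f)) * N ^ n)"
  note blk = gdrazin_block[OF ff cf fh ch hcf X(2,3)[folded X_def] X(1)[folded X_def, unfolded N_def]]
  define y where "y = h + X"
  have "fast_decay (\<lambda>n. (c - c * c * y) ^ n)"
    unfolding y_def blk(5) using blk(6,7) by (intro fast_decay_power_add_nilpotent decN[unfolded N_def])
  then have "is_gdrazin c y"
    using blk(1,2) unfolding is_gdrazin_def y_def by (simp add: fast_decay_imp_quasinilpotent)
  then show ?thesis
    using that blk(3,4) by (simp add: y_def f_def)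
qed

section \<open>The weighted generalized core-EP inverse\<close>

lemma mult_power_mult_swap:
  fixes w a :: "'a::monoid_mult"
  shows "w * (a * w) ^ n = (w * a) ^ n * w"
proof (induction n)
  case (Suc n)
  have "w * (a * w) ^ Suc n = (w * (a * w) ^ n) * (a * w)"
    by (simp only: power_Suc2 mult.assoc)
  also have "\<dots> = (w * a) ^ Suc n * w"
    by (simp only: Suc.IH power_Suc2 mult.assoc)
  finally show ?case .
qed simp

text \<open>The (unweighted) generalized core-EP inverse \<open>g\<close> of \<open>c\<close>; the limit condition of the
  paper, \<open>\<parallel>c\<^sup>n - g c\<^sup>n\<^sup>+\<^sup>1\<parallel>\<^sup>1\<^sup>/\<^sup>n \<rightarrow> 0\<close>, appears as fast decay of \<open>(1 - g c) c\<^sup>n\<close>.\<close>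

definition is_gcEP :: "'a::cbanach_star_algebra \<Rightarrow> 'a \<Rightarrow> bool" where
  "is_gcEP c g \<longleftrightarrow> c * g * g = g \<and> invol (c * g) = c * g \<and> fast_decay (\<lambda>n. (1 - g * c) * c ^ n)"

lemma is_wgcEP_imp_is_gcEP:
  fixes a w x :: "'a::cbanach_star_algebra"
  assumes "is_wgcEP a w x"
  shows "is_gcEP (w * a) (w * x)"
proof -
  define c where "c = w * a"
  define g where "g = w * x"
  have x: "a * (w * x) ^ 2 = x" and sa: "invol (w * a * w * x) = w * a * w * x"
    and lim: "(\<lambda>n. root n (norm ((a * w) ^ n - (x * w) * (a * w) ^ Suc n))) \<longlonglongrightarrow> 0"
    using assms unfolding is_wgcEP_def by auto
  have "c * g * g = w * (a * (w * x) ^ 2)"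
    by (simp add: c_def g_def power2_eq_square mult.assoc)
  then have cgg: "c * g * g = g"
    using x by (simp add: g_def)
  have wpa: "w * (a * w) ^ m * a = c ^ Suc m" for m
    by (simp add: mult_power_mult_swap c_def power_Suc2 mult.assoc del: power_Suc)
  define H where "H n = (a * w) ^ n - (x * w) * (a * w) ^ Suc n" for n
  have "w * H n * a = (1 - g * c) * c ^ Suc n" for n
  proof -
    have "w * H n * a = w * (a * w) ^ n * a - (w * x) * (w * (a * w) ^ Suc n * a)"
      by (simp add: H_def algebra_simps del: power_Suc)
    also have "\<dots> = c ^ Suc n - g * c ^ Suc (Suc n)"
      by (simp only: wpa g_def)
    finally show ?thesis
      by (simp add: algebra_simps)
  qed
  then have "norm ((1 - g * c) * c ^ Suc n) \<le> (norm w * norm a) * (1 ^ n * norm (H n))" for n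
    using norm_mult3_le[of w "H n" a] by (simp add: ac_simps)
  then have "fast_decay (\<lambda>n. (1 - g * c) * c ^ Suc n)"
    by (rule fast_decay_dominated[OF fast_decay_root[OF lim[folded H_def]], rotated]) simp
  then have "fast_decay (\<lambda>n. (1 - g * c) * c ^ n)"
    by (simp only: fast_decay_Suc_iff[of "\<lambda>n. (1 - g * c) * c ^ n"])
  moreover have "invol (c * g) = c * g"
    using sa by (simp add: c_def g_def mult.assoc)
  ultimately show ?thesis
    using cgg by (simp add: is_gcEP_def c_def g_def)
qed

lemma gcEP_absorb:
  assumes g1: "is_gcEP c g1" and g2: "is_gcEP c g2"
  shows "g1 * c * (g2 * c) = g2 * c"
proof -
  have "(1 - g1 * c) * (g2 * c) = (1 - g1 * c) * c ^ n * 1 * g2 ^ n * (g2 * c)" for n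
  proof -
    have "(1 - g1 * c) * c ^ n * 1 * g2 ^ n * (g2 * c) = (1 - g1 * c) * (c ^ n * g2 ^ Suc n) * c"
      by (simp only: mult_1_right power_Suc2 mult.assoc)
    also have "\<dots> = (1 - g1 * c) * (g2 * c)"
      using g2 power_mult_power_Suc_absorb[of c g2 n] by (simp add: is_gcEP_def mult.assoc)
    finally show ?thesis ..
  qed
  moreover have "fast_decay (\<lambda>n. (1 - g1 * c) * c ^ n)"
    using g1 by (simp add: is_gcEP_def)
  ultimately have "(1 - g1 * c) * (g2 * c) = 0"
    using fast_decay_mult_power_zero by blast
  then show ?thesis
    by (simp add: algebra_simps)
qed

lemma gcEP_unique:
  assumes g1: "is_gcEP c g1" and g2: "is_gcEP c g2"
  shows "g1 = g2"
proof -
  have core1: "g1 * c * g1 = g1" "g1 * c * (c * g1) = c * g1"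
    using g1 core_identities unfolding is_gcEP_def by blast+
  have core2: "g2 * c * g2 = g2" "g2 * c * (c * g2) = c * g2"
    using g2 core_identities unfolding is_gcEP_def by blast+
  have r12: "g1 * c * (g2 * c) = g2 * c" and r21: "g2 * c * (g1 * c) = g1 * c"
    using gcEP_absorb g1 g2 by blast+
  have Pf1: "c * g1 * (g1 * c) = g1 * c" and Pf2: "c * g2 * (g2 * c) = g2 * c"
    using g1 g2 unfolding is_gcEP_def by (metis mult.assoc)+
  have P12: "c * g1 * (c * g2) = c * g2"
    by (metis core2(2) r12 Pf1 mult.assoc)
  have P21: "c * g2 * (c * g1) = c * g1"
    by (metis core1(2) r21 Pf2 mult.assoc)
  \<comment> \<open>\<open>c g\<^sub>1\<close> and \<open>c g\<^sub>2\<close> are self-adjoint idempotents absorbing each other, hence equal\<close>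
  have "c * g2 = invol (c * g1 * (c * g2))"
    using g2 P12 by (simp add: is_gcEP_def)
  also have "\<dots> = c * g2 * (c * g1)"
    using g1 g2 by (simp add: is_gcEP_def invol_mult)
  finally have P: "c * g2 = c * g1"
    using P21 by simp
  have "g1 = g1 * (c * g2)"
    using core1(1) P by (simp add: mult.assoc)
  also have "\<dots> = g1 * c * (g2 * c) * g2"
    using core2(1) by (simp add: mult.assoc)
  also have "\<dots> = g2"
    using r12 core2(1) by simp
  finally show ?thesis .
qed

lemma wgcEP_unique:
  assumes "is_wgcEP a w x1" "is_wgcEP a w x2"
  shows "x1 = x2"
proof -
  have "w * x1 = w * x2"
    using gcEP_unique is_wgcEP_imp_is_gcEP assms by blast
  then show ?thesis
    using assms unfolding is_wgcEP_def by metis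
qed

lemma wgcEP_eq: "is_wgcEP a w x \<Longrightarrow> wgcEP a w = x"
  unfolding wgcEP_def by (blast intro: wgcEP_unique)

lemma one_minus_mult_eq_zero_iff:
  fixes p q b :: "'a::ring_1"
  assumes "p * q = q" "q * p = p"
  shows "(1 - p) * b = 0 \<longleftrightarrow> (1 - q) * b = 0"
proof -
  have "(1 - q) * p = 0" "(1 - p) * q = 0"
    using assms by (simp_all add: left_diff_distrib)
  moreover have "(1 - q) * ((1 - p) * b) = (1 - q) * b - ((1 - q) * p) * b"
    and "(1 - p) * ((1 - q) * b) = (1 - p) * b - ((1 - p) * q) * b"
    by (simp_all add: algebra_simps)
  ultimately show ?thesis
    by (metis diff_zero mult_zero_left mult_zero_right)
qed

theorem lemma4p6:
  fixes a w b :: "'a::cbanach_star_algebra"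
  assumes "\<exists>x. is_wgcEP a w x"
  shows "((1 - w * a * w * wgcEP a w) * b = 0 \<longleftrightarrow> (1 - w * wgcEP a w * w * a) * b = 0)
       \<and> ((1 - w * wgcEP a w * w * a) * b = 0 \<longleftrightarrow> spectral_idem (w * a) * b = 0)"
proof -
  obtain x where x: "is_wgcEP a w x"
    using assms by blast
  define c where "c = w * a"
  define g where "g = w * x"
  have gc: "is_gcEP c g"
    unfolding c_def g_def by (rule is_wgcEP_imp_is_gcEP[OF x])
  then have core: "g * c * (c * g) = c * g" and cgg: "c * g * g = g"
    using core_identities unfolding is_gcEP_def by blast+
  obtain y where y: "is_gdrazin c y" "c * y * (g * c) = g * c" "g * c * (c * y) = c * y"
    using gdrazin_exists gc unfolding is_gcEP_def by blast
  have "w * a * w * wgcEP a w = c * g" and "w * wgcEP a w * w * a = g * c"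
    by (simp_all add: wgcEP_eq[OF x] c_def g_def mult.assoc)
  moreover have "spectral_idem (w * a) = 1 - c * y"
    unfolding spectral_idem_def c_def[symmetric] gdrazin_eq[OF y(1)] ..
  moreover have "c * g * (g * c) = g * c"
    using cgg by (simp add: mult.assoc[symmetric])
  ultimately show ?thesis
    using one_minus_mult_eq_zero_iff[of "c * g" "g * c" b] one_minus_mult_eq_zero_iff[OF y(3,2), of b]
      core by simp
qed

end
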